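(* (1) Let $(Y_0,Y_1)$ be an arbitrary pair of real random variables and let $Y$ and $D\in\{0,1\}$ satisfy $Y=Y_1D+Y_0(1-D)$ and almost surely $Y_1>Y_0\Rightarrow D=1$, $Y_1<Y_0\Rightarrow D=0$. Then the distribution functions $F_0,F_1$ of $Y_0,Y_1$ satisfy $$F_d(y_2)-F_d(y_1)\ge \mathbb P(y_1<Y\le y_2,D=d)+\mathbb P(Y\le y_2,D=1-d)\,1\{y_1=-\infty\}\qquad(\ast)$$ for $d=0,1$ and all $y_1,y_2\in\mathbb R\cup\{\pm\infty\}$ with $y_1<y_2$. (2) Conversely, let $Y$ be an arbitrary real random variable and $D$ a binary random variable, and let $F_0,F_1$ be right-continuous functions satisfying $(\ast)$ for $d=0,1$ and all $y_1<y_2$ in $\mathbb R\cup\{\pm\infty\}$. Then there exist, on some probability space, random variables $(\tilde Y,\tilde D,Y_0,Y_1)$ with $(\tilde Y,\tilde D)$ distributed as $(Y,D)$, $Y_0$ and $Y_1$ having distribution functions $F_0$ and $F_1$ respectively, $\tilde Y=Y_1\tilde D+Y_0(1-\tilde D)$, and almost surely $Y_1>Y_0\Rightarrow\tilde D=1$, $Y_1<Y_0\Rightarrow\tilde D=0$.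
   Context: For a function $F$ on $\mathbb R$, $F(\pm\infty)$ denotes the limits at $\pm\infty$; for $y_1=-\infty$ the event $\{y_1<Y\le y_2\}$ is $\{Y\le y_2\}$, and for $y_2=+\infty$ the event $\{Y\le y_2\}$ is the whole space. *)

theory Defs
  imports "HOL-Probability.Probability"
begin

definition Fext :: "(real \<Rightarrow> real) \<Rightarrow> ereal \<Rightarrow> real" where
  "Fext F y = (case y of ereal r \<Rightarrow> F r | PInfty \<Rightarrow> Lim at_top F | MInfty \<Rightarrow> Lim at_bot F)"

text \<open>The inequality system (*) for d = 0,1 and all extended reals y1 < y2.
The event y1 < Y \<le> y2 is read with ereal comparisons, which gives exactly the
conventions for y1 = -oo and y2 = +oo.\<close>
definition star_ineq ::
  "'a measure \<Rightarrow> ('a \<Rightarrow> real) \<Rightarrow> ('a \<Rightarrow> real) \<Rightarrow> (real \<Rightarrow> real) \<Rightarrow> (real \<Rightarrow> real) \<Rightarrow> bool" where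
  "star_ineq M Y D F0 F1 \<longleftrightarrow>
     (\<forall>d\<in>{0::real, 1}. \<forall>y1 y2 :: ereal. y1 < y2 \<longrightarrow>
        Fext (if d = 0 then F0 else F1) y2 - Fext (if d = 0 then F0 else F1) y1 \<ge>
          measure M {\<omega> \<in> space M. y1 < ereal (Y \<omega>) \<and> ereal (Y \<omega>) \<le> y2 \<and> D \<omega> = d}
          + measure M {\<omega> \<in> space M. ereal (Y \<omega>) \<le> y2 \<and> D \<omega> = 1 - d}
              * (if y1 = -\<infinity> then 1 else 0))"

end

theory Submission
  imports Defs
begin

text \<open>Necessity: on D = d the outcome Y equals Y_d, and for y1 = -oo the selection rule gives
  Y_d \<le> Y almost surely on D = 1 - d, so both events on the right of (*) lie in
  y1 < Y_d \<le> y2.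

  Sufficiency is a quantile coupling driven by one uniform variable U on (0,1). The pair (Y, D)
  is reproduced by the quantile transform of the real variable arctan Y + 4 D, and D = 0
  corresponds to U \<le> P(D = 0). On that part Y0 := Y, while Y1 is the quantile at U of
  F1 - P(Y \<le> _, D = 1), which (*) shows to be nondecreasing and to dominate P(Y \<le> _, D = 0);
  hence Y1 \<le> Y0 there. The part D = 1 is symmetric. Each Y_d then has distribution function
  P(Y \<le> y, D = d) + (F_d(y) - P(Y \<le> y, D = d)) = F_d(y).\<close>

lemma finite_borel_measure_distr:
  assumes "finite_measure M" "X \<in> borel_measurable M"
  shows "finite_borel_measure (distr M borel X)"
  using assms by (simp add: finite_borel_measure.intro finite_borel_measure_axioms.intro
      finite_measure.finite_measure_distr)

lemma cdf_distr_eq_measure: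
  assumes "X \<in> borel_measurable M"
  shows "cdf (distr M borel X) x = measure M {\<omega>\<in>space M. X \<omega> \<le> x}"
  using assms by (simp add: cdf_def measure_distr vimage_def Int_def conj_commute)

lemma Fext_cdf_distr:
  assumes "finite_measure M" "X \<in> borel_measurable M"
  shows "Fext (cdf (distr M borel X)) y = measure M {\<omega>\<in>space M. ereal (X \<omega>) \<le> y}"
proof -
  interpret finite_borel_measure "distr M borel X"
    using assms by (rule finite_borel_measure_distr)
  show ?thesis
  proof (cases y)
    case (real r)
    then show ?thesis using assms by (simp add: Fext_def cdf_distr_eq_measure)
  next
    case PInf
    have "Lim at_top (cdf (distr M borel X)) = measure M (space M)"
      using cdf_lim_at_top assms by (intro tendsto_Lim) (auto simp: measure_distr)
    then show ?thesis using PInf by (simp add: Fext_def)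
  next
    case MInf
    have "Lim at_bot (cdf (distr M borel X)) = 0"
      using cdf_lim_at_bot by (intro tendsto_Lim) auto
    then show ?thesis using MInf by (simp add: Fext_def)
  qed
qed

lemma (in finite_measure) measure_ereal_interval:
  assumes [measurable]: "X \<in> borel_measurable M" "Measurable.pred M P" and "y1 \<le> y2"
  shows "measure M {\<omega>\<in>space M. y1 < ereal (X \<omega>) \<and> ereal (X \<omega>) \<le> y2 \<and> P \<omega>}
    = measure M {\<omega>\<in>space M. ereal (X \<omega>) \<le> y2 \<and> P \<omega>} - measure M {\<omega>\<in>space M. ereal (X \<omega>) \<le> y1 \<and> P \<omega>}"
proof -
  have "{\<omega>\<in>space M. y1 < ereal (X \<omega>) \<and> ereal (X \<omega>) \<le> y2 \<and> P \<omega>}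
      = {\<omega>\<in>space M. ereal (X \<omega>) \<le> y2 \<and> P \<omega>} - {\<omega>\<in>space M. ereal (X \<omega>) \<le> y1 \<and> P \<omega>}"
    using \<open>y1 \<le> y2\<close> by (auto intro: order.trans)
  moreover have "{\<omega>\<in>space M. ereal (X \<omega>) \<le> y1 \<and> P \<omega>} \<subseteq> {\<omega>\<in>space M. ereal (X \<omega>) \<le> y2 \<and> P \<omega>}"
    using \<open>y1 \<le> y2\<close> by (auto intro: order.trans)
  ultimately show ?thesis by (simp add: finite_measure_Diff)
qed

lemma Roy_model_star_ineq:
  assumes "prob_space M"
    and [measurable]: "Y0 \<in> borel_measurable M" "Y1 \<in> borel_measurable M"
      "Y \<in> borel_measurable M" "D \<in> borel_measurable M"
    and D01: "\<forall>\<omega>\<in>space M. D \<omega> \<in> {0, 1}"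
    and Y_eq: "\<forall>\<omega>\<in>space M. Y \<omega> = Y1 \<omega> * D \<omega> + Y0 \<omega> * (1 - D \<omega>)"
    and selection: "AE \<omega> in M. (Y1 \<omega> > Y0 \<omega> \<longrightarrow> D \<omega> = 1) \<and> (Y1 \<omega> < Y0 \<omega> \<longrightarrow> D \<omega> = 0)"
  shows "star_ineq M Y D (cdf (distr M borel Y0)) (cdf (distr M borel Y1))"
  unfolding star_ineq_def
proof (intro ballI allI impI)
  interpret prob_space M by fact
  fix d :: real and y1 y2 :: ereal
  assume d: "d \<in> {0, 1}" and "y1 < y2"
  define X where "X = (if d = 0 then Y0 else Y1)"
  have [measurable]: "X \<in> borel_measurable M" by (simp add: X_def)
  let ?A = "{\<omega>\<in>space M. y1 < ereal (Y \<omega>) \<and> ereal (Y \<omega>) \<le> y2 \<and> D \<omega> = d}"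
  let ?B = "{\<omega>\<in>space M. ereal (Y \<omega>) \<le> y2 \<and> D \<omega> = 1 - d}"
  let ?X = "{\<omega>\<in>space M. y1 < ereal (X \<omega>) \<and> ereal (X \<omega>) \<le> y2}"
  have "Fext (cdf (distr M borel X)) y2 - Fext (cdf (distr M borel X)) y1 = measure M ?X"
    using \<open>y1 < y2\<close> measure_ereal_interval[of X "\<lambda>_. True" y1 y2]
    by (simp add: Fext_cdf_distr finite_measure_axioms)
  moreover have X_eq_Y: "X \<omega> = Y \<omega>" if "\<omega> \<in> space M" "D \<omega> = d" for \<omega>
    using that Y_eq d by (auto simp: X_def)
  moreover have "measure M ?A + measure M ?B * (if y1 = -\<infinity> then 1 else 0) \<le> measure M ?X"
  proof (cases "y1 = -\<infinity>")
    case True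
    have "AE \<omega> in M. D \<omega> = 1 - d \<longrightarrow> X \<omega> \<le> Y \<omega>"
      using selection AE_space by eventually_elim (use Y_eq d D01 in \<open>auto simp: X_def\<close>)
    then have "AE \<omega> in M. \<omega> \<in> ?A \<union> ?B \<longrightarrow> \<omega> \<in> ?X"
      by eventually_elim
        (use True X_eq_Y in \<open>auto intro: order.trans[of "ereal (X _)" "ereal (Y _)"]\<close>)
    then have "measure M (?A \<union> ?B) \<le> measure M ?X"
      by (intro finite_measure_mono_AE) auto
    moreover have "measure M (?A \<union> ?B) = measure M ?A + measure M ?B"
      using d by (intro finite_measure_Union) auto
    ultimately show ?thesis using True by simp
  next
    case False
    have "measure M ?A \<le> measure M ?X"
      using X_eq_Y by (intro finite_measure_mono) auto
    then show ?thesis using False by simp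
  qed
  ultimately show "Fext (if d = 0 then cdf (distr M borel Y0) else cdf (distr M borel Y1)) y2
      - Fext (if d = 0 then cdf (distr M borel Y0) else cdf (distr M borel Y1)) y1
      \<ge> measure M ?A + measure M ?B * (if y1 = -\<infinity> then 1 else 0)"
    by (simp add: X_def split: if_splits)
qed

lemma mono_unit_range_tendsto:
  fixes F :: "real \<Rightarrow> real"
  assumes "mono F" and range: "\<And>x. 0 \<le> F x \<and> F x \<le> 1"
    and gap: "Lim at_top F - Lim at_bot F \<ge> 1"
  shows "(F \<longlongrightarrow> 1) at_top" "(F \<longlongrightarrow> 0) at_bot"
proof -
  have bdd: "bdd_above (range F)" "bdd_below (range F)"
    using range by (auto intro: bdd_aboveI[of _ 1] bdd_belowI[of _ 0])
  have top: "(F \<longlongrightarrow> Sup (range F)) at_top"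
  proof (rule increasing_tendsto)
    show "\<forall>\<^sub>F x in at_top. F x \<le> Sup (range F)"
      using bdd by (intro always_eventually allI cSUP_upper) auto
    fix x assume "x < Sup (range F)"
    then obtain y where "x < F y" using less_cSUP_iff[of UNIV F x] bdd by auto
    then show "\<forall>\<^sub>F z in at_top. x < F z"
      unfolding eventually_at_top_linorder using \<open>mono F\<close> by (meson less_le_trans monoD)
  qed
  have bot: "(F \<longlongrightarrow> Inf (range F)) at_bot"
  proof (rule decreasing_tendsto)
    show "\<forall>\<^sub>F x in at_bot. Inf (range F) \<le> F x"
      using bdd by (intro always_eventually allI cINF_lower) auto
    fix x assume "Inf (range F) < x"
    then obtain y where "F y < x" using cINF_less_iff[of UNIV F x] bdd by auto
    then show "\<forall>\<^sub>F z in at_bot. F z < x"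
      unfolding eventually_at_bot_linorder using \<open>mono F\<close> by (meson le_less_trans monoD)
  qed
  have "Sup (range F) \<le> 1" "0 \<le> Inf (range F)"
    using range by (auto intro: cSUP_least cINF_greatest)
  moreover have "Lim at_top F = Sup (range F)" "Lim at_bot F = Inf (range F)"
    using top bot by (auto intro: tendsto_Lim)
  ultimately have "Sup (range F) = 1" "Inf (range F) = 0"
    using gap by auto
  then show "(F \<longlongrightarrow> 1) at_top" "(F \<longlongrightarrow> 0) at_bot"
    using top bot by auto
qed

definition quantile :: "(real \<Rightarrow> real) \<Rightarrow> real \<Rightarrow> real" where
  "quantile K u = Inf {y. u \<le> K y}"

lemma quantile_le_iff:
  fixes K :: "real \<Rightarrow> real"
  assumes "mono K" and right_cont: "\<And>x. continuous (at_right x) K"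
    and "(K \<longlongrightarrow> a) at_bot" "(K \<longlongrightarrow> b) at_top" "a < u" "u < b"
  shows "quantile K u \<le> x \<longleftrightarrow> u \<le> K x"
proof -
  let ?S = "{y. u \<le> K y}"
  obtain y0 where "K y0 < u"
    using order_tendstoD(2)[OF assms(3,5)] by (auto simp: eventually_at_bot_linorder)
  obtain y1 where "u \<le> K y1"
    using order_tendstoD(1)[OF assms(4,6)] unfolding eventually_at_top_linorder by (blast intro: less_imp_le)
  then have ne: "?S \<noteq> {}" by auto
  have bdd: "bdd_below ?S"
  proof (rule bdd_belowI)
    fix y assume "y \<in> ?S"
    then show "y0 \<le> y"
      using \<open>K y0 < u\<close> monoD[OF \<open>mono K\<close>, of y y0] by (cases "y \<le> y0") auto
  qed
  have "\<forall>\<^sub>F y in at_right (Inf ?S). u \<le> K y"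
  proof (rule eventually_mono[OF eventually_at_right_less])
    fix y assume "Inf ?S < y"
    then obtain s where "u \<le> K s" "s < y" using cInf_lessD[OF ne] by auto
    then show "u \<le> K y" using monoD[OF \<open>mono K\<close>, of s y] by simp
  qed
  then have inf_mem: "u \<le> K (Inf ?S)"
    using right_cont[of "Inf ?S"] by (intro tendsto_lowerbound) (auto simp: continuous_within)
  show ?thesis
    unfolding quantile_def
  proof
    assume "Inf ?S \<le> x"
    then show "u \<le> K x" using inf_mem monoD[OF \<open>mono K\<close>] by (blast intro: order.trans)
  qed (use bdd in \<open>auto intro: cInf_lower\<close>)
qed

definition uniform01 :: "real measure" where
  "uniform01 = restrict_space lborel {0<..<1}"

lemma prob_space_uniform01: "prob_space uniform01"
  unfolding uniform01_def by (rule prob_space_restrict_space) auto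

lemma space_uniform01 [simp]: "space uniform01 = {0<..<1}"
  unfolding uniform01_def by simp

lemma sets_uniform01: "A \<in> sets uniform01 \<longleftrightarrow> A \<subseteq> {0<..<1} \<and> A \<in> sets borel"
  unfolding uniform01_def by (subst sets_restrict_space_iff) auto

lemma measurable_ident_uniform01 [measurable]: "(\<lambda>u. u) \<in> borel_measurable uniform01"
  unfolding uniform01_def by (rule measurable_restrict_space1) (simp add: measurable_ident_sets)

lemma measure_uniform01_Ioo: "0 \<le> a \<Longrightarrow> a \<le> b \<Longrightarrow> b \<le> 1 \<Longrightarrow> measure uniform01 {a<..<b} = b - a"
  unfolding uniform01_def by (subst measure_restrict_space) auto

lemma measure_uniform01_Ioo_Un:
  assumes "0 \<le> a" "a \<le> p" "p \<le> b" "b \<le> 1"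
  shows "measure uniform01 ({0<..<a} \<union> {p<..<b}) = a + (b - p)"
proof -
  interpret prob_space uniform01 by (rule prob_space_uniform01)
  have "measure uniform01 ({0<..<a} \<union> {p<..<b}) = measure uniform01 {0<..<a} + measure uniform01 {p<..<b}"
    using assms by (intro finite_measure_Union) (auto simp: sets_uniform01)
  then show ?thesis using assms by (simp add: measure_uniform01_Ioo)
qed

lemma AE_uniform01_neq: "AE u in uniform01. u \<noteq> c"
  unfolding uniform01_def
  by (subst AE_restrict_space_iff) (auto intro: AE_mp[OF AE_lborel_singleton[of c]])

lemma cdf_quantile_le_iff:
  assumes "real_distribution \<mu>" "0 < u" "u < 1"
  shows "quantile (cdf \<mu>) u \<le> x \<longleftrightarrow> u \<le> cdf \<mu> x"
proof -
  interpret real_distribution \<mu> by fact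
  show ?thesis
    using assms(2,3) cdf_is_right_cont cdf_lim_at_bot cdf_lim_at_top_prob
    by (intro quantile_le_iff) (auto simp: mono_def cdf_nondecreasing)
qed

lemma borel_measurable_quantile_cdf:
  assumes "real_distribution \<mu>"
  shows "quantile (cdf \<mu>) \<in> borel_measurable uniform01"
proof (subst borel_measurable_iff_le, intro allI)
  fix x
  have "{u \<in> space uniform01. quantile (cdf \<mu>) u \<le> x} = {u \<in> space uniform01. u \<le> cdf \<mu> x}"
    using cdf_quantile_le_iff[OF assms] by auto
  also have "\<dots> \<in> sets uniform01" by measurable
  finally show "{u \<in> space uniform01. quantile (cdf \<mu>) u \<le> x} \<in> sets uniform01" .
qed

lemma distr_uniform01_quantile_cdf:
  assumes \<mu>: "real_distribution \<mu>"
  shows "distr uniform01 borel (quantile (cdf \<mu>)) = \<mu>"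
proof (rule cdf_unique)
  interpret real_distribution \<mu> by fact
  note Q_meas = borel_measurable_quantile_cdf[OF \<mu>]
  show "real_distribution (distr uniform01 borel (quantile (cdf \<mu>)))"
    using Q_meas by (rule prob_space.real_distribution_distr[OF prob_space_uniform01])
  show "cdf (distr uniform01 borel (quantile (cdf \<mu>))) = cdf \<mu>"
  proof
    fix x
    have "cdf (distr uniform01 borel (quantile (cdf \<mu>))) x
        = measure uniform01 {u \<in> space uniform01. quantile (cdf \<mu>) u \<le> x}"
      using Q_meas by (rule cdf_distr_eq_measure)
    also have "\<dots> = measure uniform01 {0<..<cdf \<mu> x}"
    proof (rule measure_eq_AE)
      show "AE u in uniform01. u \<in> {u \<in> space uniform01. quantile (cdf \<mu>) u \<le> x} \<longleftrightarrow> u \<in> {0<..<cdf \<mu> x}"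
        using AE_space AE_uniform01_neq[of "cdf \<mu> x"]
        by eventually_elim (auto simp: cdf_quantile_le_iff[OF \<mu>])
      show "{u \<in> space uniform01. quantile (cdf \<mu>) u \<le> x} \<in> sets uniform01"
        using Q_meas by measurable
      show "{0<..<cdf \<mu> x} \<in> sets uniform01"
        using cdf_bounded_prob[of x] by (auto simp: sets_uniform01)
    qed
    also have "\<dots> = cdf \<mu> x"
      using cdf_nonneg cdf_bounded_prob by (simp add: measure_uniform01_Ioo)
    finally show "cdf (distr uniform01 borel (quantile (cdf \<mu>))) x = cdf \<mu> x" .
  qed
qed fact

definition unpack :: "real \<Rightarrow> real \<times> real" where
  "unpack z = (if z \<le> 2 then (tan z, 0) else (tan (z - 4), 1))"

lemma unpack_meas [measurable]: "unpack \<in> borel \<rightarrow>\<^sub>M borel \<Otimes>\<^sub>M borel"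
  unfolding unpack_def tan_def by measurable

locale star_coupling =
  fixes M :: "'a measure" and Y D :: "'a \<Rightarrow> real" and F0 F1 :: "real \<Rightarrow> real"
  assumes M_prob: "prob_space M"
    and Y_meas [measurable]: "Y \<in> borel_measurable M"
    and D_meas [measurable]: "D \<in> borel_measurable M"
    and D01: "\<forall>\<omega>\<in>space M. D \<omega> \<in> {0, 1}"
    and F0_right_cont: "\<forall>x. continuous (at_right x) F0"
    and F1_right_cont: "\<forall>x. continuous (at_right x) F1"
    and F0_range: "\<forall>x. 0 \<le> F0 x \<and> F0 x \<le> 1"
    and F1_range: "\<forall>x. 0 \<le> F1 x \<and> F1 x \<le> 1"
    and star: "star_ineq M Y D F0 F1"
begin

interpretation prob_space M by (rule M_prob)

definition F :: "real \<Rightarrow> real \<Rightarrow> real" where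
  "F d = (if d = 0 then F0 else F1)"

definition p :: "real \<Rightarrow> real" where
  "p d = measure M {\<omega>\<in>space M. D \<omega> = d}"

text \<open>G d y = P(Y \<le> y, D = d) (lemma G_eq); defining G d as a distribution function of a
  finite measure provides monotonicity, right-continuity and the limits at infinity.\<close>

definition G :: "real \<Rightarrow> real \<Rightarrow> real" where
  "G d = cdf (distr (restrict_space M {\<omega>\<in>space M. D \<omega> = d}) borel Y)"

lemma p_sum: "p 0 + p 1 = 1"
proof -
  have "p 0 + p 1 = measure M ({\<omega>\<in>space M. D \<omega> = 0} \<union> {\<omega>\<in>space M. D \<omega> = 1})"
    unfolding p_def by (subst finite_measure_Union) auto
  also have "{\<omega>\<in>space M. D \<omega> = 0} \<union> {\<omega>\<in>space M. D \<omega> = 1} = space M"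
    using D01 by auto
  finally show ?thesis by (simp add: prob_space)
qed

lemma finite_borel_measure_G: "finite_borel_measure (distr (restrict_space M {\<omega>\<in>space M. D \<omega> = d}) borel Y)"
  by (intro finite_borel_measure_distr finite_measure_restrict_space finite_measure_axioms
      measurable_restrict_space1) auto

lemma Fext_G: "Fext (G d) y = measure M {\<omega>\<in>space M. ereal (Y \<omega>) \<le> y \<and> D \<omega> = d}"
proof -
  let ?A = "{\<omega>\<in>space M. D \<omega> = d}"
  have "Fext (G d) y = measure (restrict_space M ?A) {\<omega>\<in>?A. ereal (Y \<omega>) \<le> y}"
    unfolding G_def
    by (subst Fext_cdf_distr) (auto intro: finite_measure_restrict_space finite_measure_axioms
        measurable_restrict_space1 simp: space_restrict_space Int_absorb2)
  also have "\<dots> = measure M {\<omega>\<in>?A. ereal (Y \<omega>) \<le> y}"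
    by (subst measure_restrict_space) auto
  also have "{\<omega>\<in>?A. ereal (Y \<omega>) \<le> y} = {\<omega>\<in>space M. ereal (Y \<omega>) \<le> y \<and> D \<omega> = d}"
    by auto
  finally show ?thesis .
qed

lemma G_eq: "G d y = measure M {\<omega>\<in>space M. Y \<omega> \<le> y \<and> D \<omega> = d}"
  using Fext_G[of d "ereal y"] by (simp add: Fext_def)

lemma G_nonneg: "0 \<le> G d y"
  by (simp add: G_eq)

lemma G_le_p: "G d y \<le> p d"
  unfolding G_eq p_def by (intro finite_measure_mono) auto

lemma G_mono: "mono (G d)"
  unfolding G_def mono_def using finite_borel_measure.cdf_nondecreasing[OF finite_borel_measure_G] by blast

lemma G_right_cont: "continuous (at_right x) (G d)"
  unfolding G_def using finite_borel_measure.cdf_is_right_cont[OF finite_borel_measure_G] .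

lemma G_tendsto_bot: "(G d \<longlongrightarrow> 0) at_bot"
  unfolding G_def using finite_borel_measure.cdf_lim_at_bot[OF finite_borel_measure_G] .

lemma G_tendsto_top: "(G d \<longlongrightarrow> p d) at_top"
proof -
  let ?A = "{\<omega>\<in>space M. D \<omega> = d}"
  let ?\<mu> = "distr (restrict_space M ?A) borel Y"
  have "Y \<in> borel_measurable (restrict_space M ?A)"
    by (rule measurable_restrict_space1) simp
  then have "measure ?\<mu> (space ?\<mu>) = p d"
    by (simp add: measure_distr measure_restrict_space space_restrict_space Int_absorb2 p_def)
  then show ?thesis
    using finite_borel_measure.cdf_lim_at_top[OF finite_borel_measure_G, of d] by (simp add: G_def)
qed

lemma star_ineq_G:
  assumes "d \<in> {0, 1}" "y1 < y2"
  shows "Fext (G d) y2 - Fext (G d) y1 + (if y1 = -\<infinity> then Fext (G (1 - d)) y2 else 0)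
    \<le> Fext (F d) y2 - Fext (F d) y1"
proof -
  have "Fext (F d) y2 - Fext (F d) y1
      \<ge> measure M {\<omega>\<in>space M. y1 < ereal (Y \<omega>) \<and> ereal (Y \<omega>) \<le> y2 \<and> D \<omega> = d}
        + measure M {\<omega>\<in>space M. ereal (Y \<omega>) \<le> y2 \<and> D \<omega> = 1 - d} * (if y1 = -\<infinity> then 1 else 0)"
    using star assms unfolding star_ineq_def F_def by blast
  moreover have "measure M {\<omega>\<in>space M. y1 < ereal (Y \<omega>) \<and> ereal (Y \<omega>) \<le> y2 \<and> D \<omega> = d}
      = Fext (G d) y2 - Fext (G d) y1"
    using measure_ereal_interval[of Y "\<lambda>\<omega>. D \<omega> = d" y1 y2] assms(2) by (simp add: Fext_G)
  ultimately show ?thesis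
    by (cases "y1 = -\<infinity>") (simp_all add: Fext_G)
qed

lemma Fext_G_infinity: "Fext (G d) \<infinity> = p d" "Fext (G d) (-\<infinity>) = 0"
  by (simp_all add: Fext_G p_def)

lemma F_range: "0 \<le> F d x" "F d x \<le> 1"
  using F0_range F1_range by (simp_all add: F_def)

lemma F_increment:
  assumes "d \<in> {0, 1}" "r \<le> s"
  shows "G d s - G d r \<le> F d s - F d r"
  using star_ineq_G[OF assms(1), of "ereal r" "ereal s"] assms(2)
  by (cases "r = s") (simp_all add: Fext_def)

lemma F_mono:
  assumes "d \<in> {0, 1}"
  shows "mono (F d)"
proof (rule monoI)
  fix r s :: real
  assume "r \<le> s"
  then show "F d r \<le> F d s"
    using F_increment[OF assms \<open>r \<le> s\<close>] monoD[OF G_mono \<open>r \<le> s\<close>, of d] by simp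
qed

lemma F_tendsto:
  assumes "d \<in> {0, 1}"
  shows "(F d \<longlongrightarrow> 1) at_top" "(F d \<longlongrightarrow> 0) at_bot"
proof -
  have "p d + p (1 - d) = 1" using assms p_sum by auto
  then have "Lim at_top (F d) - Lim at_bot (F d) \<ge> 1"
    using star_ineq_G[OF assms, of "-\<infinity>" \<infinity>] by (simp add: Fext_G_infinity) (simp add: Fext_def)
  then show "(F d \<longlongrightarrow> 1) at_top" "(F d \<longlongrightarrow> 0) at_bot"
    using mono_unit_range_tendsto[OF F_mono[OF assms]] F_range by auto
qed

lemma F_lower:
  assumes "d \<in> {0, 1}"
  shows "G 0 y + G 1 y \<le> F d y"
proof -
  have "Lim at_bot (F d) = 0" using F_tendsto[OF assms] by (simp add: tendsto_Lim)
  then show ?thesis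
    using star_ineq_G[OF assms, of "-\<infinity>" "ereal y"] assms
    by (simp add: Fext_G_infinity) (auto simp: Fext_def)
qed

lemma F_upper:
  assumes "d \<in> {0, 1}"
  shows "p d - G d y \<le> 1 - F d y"
proof -
  have "Lim at_top (F d) = 1" using F_tendsto[OF assms] by (simp add: tendsto_Lim)
  then show ?thesis
    using star_ineq_G[OF assms, of "ereal y" \<infinity>]
    by (simp add: Fext_G_infinity) (simp add: Fext_def)
qed

text \<open>On the part (p 0, 1) of the unit interval, which will code D = 1, the outcome Y0 is
  not observed and receives the remaining mass F0 - G 0 of its distribution, through the
  quantiles of K0; symmetrically Y1 on (0, p 0) through K1.\<close>

definition K0 :: "real \<Rightarrow> real" where
  "K0 y = F 0 y - G 0 y + p 0"

definition K1 :: "real \<Rightarrow> real" where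
  "K1 y = F 1 y - G 1 y"

lemma K0_quantile_le_iff:
  assumes "p 0 < u" "u < 1"
  shows "quantile K0 u \<le> y \<longleftrightarrow> u \<le> K0 y"
proof (rule quantile_le_iff)
  show "mono K0"
  proof (rule monoI)
    fix r s :: real
    assume "r \<le> s"
    then show "K0 r \<le> K0 s" using F_increment[of 0 r s] by (simp add: K0_def)
  qed
  show "continuous (at_right x) K0" for x
    using F0_right_cont G_right_cont unfolding K0_def F_def by (intro continuous_intros) auto
  show "(K0 \<longlongrightarrow> 0 - 0 + p 0) at_bot"
    unfolding K0_def using F_tendsto(2)[of 0] G_tendsto_bot by (intro tendsto_intros) auto
  show "(K0 \<longlongrightarrow> 1 - p 0 + p 0) at_top"
    unfolding K0_def using F_tendsto(1)[of 0] G_tendsto_top by (intro tendsto_intros) auto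
qed (use assms in simp_all)

lemma K1_quantile_le_iff:
  assumes "0 < u" "u < p 0"
  shows "quantile K1 u \<le> y \<longleftrightarrow> u \<le> K1 y"
proof (rule quantile_le_iff)
  show "mono K1"
  proof (rule monoI)
    fix r s :: real
    assume "r \<le> s"
    then show "K1 r \<le> K1 s" using F_increment[of 1 r s] by (simp add: K1_def)
  qed
  show "continuous (at_right x) K1" for x
    using F1_right_cont G_right_cont unfolding K1_def F_def by (intro continuous_intros) auto
  show "(K1 \<longlongrightarrow> 0 - 0) at_bot"
    unfolding K1_def using F_tendsto(2)[of 1] G_tendsto_bot by (intro tendsto_intros) auto
  show "(K1 \<longlongrightarrow> 1 - p 1) at_top"
    unfolding K1_def using F_tendsto(1)[of 1] G_tendsto_top by (intro tendsto_intros) auto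
qed (use assms p_sum in simp_all)

lemma K0_bounds: "p 0 + G 1 y \<le> K0 y" "K0 y \<le> 1"
  using F_lower[of 0 y] F_upper[of 0 y] by (simp_all add: K0_def)

lemma K1_bounds: "G 0 y \<le> K1 y" "K1 y \<le> p 0"
  using F_lower[of 1 y] F_upper[of 1 y] p_sum by (simp_all add: K1_def)

text \<open>Z packs (Y, D) into one real variable, with values in (-pi/2, pi/2) when D = 0 and in
  (4 - pi/2, 4 + pi/2) when D = 1, so that a single quantile transform reproduces the joint law.\<close>

definition Z :: "'a \<Rightarrow> real" where
  "Z \<omega> = arctan (Y \<omega>) + 4 * D \<omega>"

definition FZ :: "real \<Rightarrow> real" where
  "FZ = cdf (distr M borel Z)"

lemma Z_meas [measurable]: "Z \<in> borel_measurable M"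
  unfolding Z_def by measurable

lemma real_distribution_Z: "real_distribution (distr M borel Z)"
  by simp

lemma FZ_eq: "FZ z = measure M {\<omega>\<in>space M. Z \<omega> \<le> z}"
  unfolding FZ_def by (rule cdf_distr_eq_measure) simp

lemma FZ_arctan: "FZ (arctan y) = G 0 y"
proof -
  have "{\<omega>\<in>space M. Z \<omega> \<le> arctan y} = {\<omega>\<in>space M. Y \<omega> \<le> y \<and> D \<omega> = 0}"
  proof (intro set_eqI iffI)
    fix \<omega> assume "\<omega> \<in> {\<omega>\<in>space M. Z \<omega> \<le> arctan y}"
    then show "\<omega> \<in> {\<omega>\<in>space M. Y \<omega> \<le> y \<and> D \<omega> = 0}"
      using D01 arctan_bounded[of "Y \<omega>"] arctan_bounded[of y] pi_less_4
      by (auto simp: Z_def arctan_le_iff)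
  qed (auto simp: Z_def arctan_le_iff)
  then show ?thesis by (simp add: FZ_eq G_eq)
qed

lemma FZ_shifted_arctan: "FZ (4 + arctan y) = p 0 + G 1 y"
proof -
  have "{\<omega>\<in>space M. Z \<omega> \<le> 4 + arctan y}
      = {\<omega>\<in>space M. D \<omega> = 0} \<union> {\<omega>\<in>space M. Y \<omega> \<le> y \<and> D \<omega> = 1}"
  proof (intro set_eqI iffI)
    fix \<omega> assume "\<omega> \<in> {\<omega>\<in>space M. Z \<omega> \<le> 4 + arctan y}"
    then show "\<omega> \<in> {\<omega>\<in>space M. D \<omega> = 0} \<union> {\<omega>\<in>space M. Y \<omega> \<le> y \<and> D \<omega> = 1}"
      using D01 by (auto simp: Z_def arctan_le_iff)
  next
    fix \<omega> assume "\<omega> \<in> {\<omega>\<in>space M. D \<omega> = 0} \<union> {\<omega>\<in>space M. Y \<omega> \<le> y \<and> D \<omega> = 1}"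
    then show "\<omega> \<in> {\<omega>\<in>space M. Z \<omega> \<le> 4 + arctan y}"
      using arctan_bounded[of "Y \<omega>"] arctan_bounded[of y] pi_less_4
      by (auto simp: Z_def arctan_le_iff)
  qed
  then show ?thesis
    unfolding FZ_eq p_def G_eq by (simp, subst finite_measure_Union) auto
qed

lemma FZ_between: "pi/2 \<le> z \<Longrightarrow> z \<le> 4 - pi/2 \<Longrightarrow> FZ z = p 0"
proof -
  assume "pi/2 \<le> z" "z \<le> 4 - pi/2"
  then have "{\<omega>\<in>space M. Z \<omega> \<le> z} = {\<omega>\<in>space M. D \<omega> = 0}"
  proof (intro set_eqI)
    fix \<omega>
    show "\<omega> \<in> {\<omega>\<in>space M. Z \<omega> \<le> z} \<longleftrightarrow> \<omega> \<in> {\<omega>\<in>space M. D \<omega> = 0}"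
      using D01 arctan_bounded[of "Y \<omega>"] \<open>pi/2 \<le> z\<close> \<open>z \<le> 4 - pi/2\<close> by (auto simp: Z_def)
  qed
  then show ?thesis by (simp add: FZ_eq p_def)
qed

lemma FZ_neg_pi_half: "FZ (- (pi/2)) = 0"
proof -
  have "{\<omega>\<in>space M. Z \<omega> \<le> - (pi/2)} = {}"
  proof (intro set_eqI)
    fix \<omega>
    show "\<omega> \<in> {\<omega>\<in>space M. Z \<omega> \<le> - (pi/2)} \<longleftrightarrow> \<omega> \<in> {}"
      using D01 arctan_bounded[of "Y \<omega>"] by (auto simp: Z_def)
  qed
  then show ?thesis by (simp only: FZ_eq measure_empty)
qed

definition Zc :: "real \<Rightarrow> real" where
  "Zc = quantile FZ"

lemma Zc_le_iff: "0 < u \<Longrightarrow> u < 1 \<Longrightarrow> Zc u \<le> z \<longleftrightarrow> u \<le> FZ z"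
  unfolding Zc_def FZ_def by (rule cdf_quantile_le_iff[OF real_distribution_Z])

lemma Zc_le_2_iff: "0 < u \<Longrightarrow> u < 1 \<Longrightarrow> Zc u \<le> 2 \<longleftrightarrow> u \<le> p 0"
  using Zc_le_iff FZ_between pi_less_4 by simp

lemma Zc_range_D0:
  assumes "0 < u" "u < p 0"
  shows "- (pi/2) < Zc u" "Zc u < pi/2"
proof -
  have "u < 1" using assms p_sum G_nonneg[of 1 0] G_le_p[of 1 0] by linarith
  obtain y where "u \<le> G 0 y"
    using order_tendstoD(1)[OF G_tendsto_top assms(2)]
    unfolding eventually_at_top_linorder by (blast intro: less_imp_le)
  then show "Zc u < pi/2"
    using Zc_le_iff[OF assms(1) \<open>u < 1\<close>, of "arctan y"] arctan_bounded[of y] by (simp add: FZ_arctan)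
  show "- (pi/2) < Zc u"
    using Zc_le_iff[OF assms(1) \<open>u < 1\<close>, of "- (pi/2)"] assms by (auto simp: FZ_neg_pi_half)
qed

lemma Zc_range_D1:
  assumes "p 0 < u" "u < 1"
  shows "4 - pi/2 < Zc u" "Zc u < 4 + pi/2"
proof -
  have "0 < u" using assms G_nonneg[of 0 0] G_le_p[of 0 0] by linarith
  have "((\<lambda>y. p 0 + G 1 y) \<longlongrightarrow> p 0 + p 1) at_top"
    by (intro tendsto_intros G_tendsto_top)
  then have "\<forall>\<^sub>F y in at_top. u < p 0 + G 1 y"
    using assms(2) p_sum by (intro order_tendstoD(1)) auto
  then obtain y where "u \<le> p 0 + G 1 y"
    unfolding eventually_at_top_linorder by (blast intro: less_imp_le)
  then show "Zc u < 4 + pi/2"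
    using Zc_le_iff[OF \<open>0 < u\<close> assms(2), of "4 + arctan y"] arctan_bounded[of y]
    by (simp add: FZ_shifted_arctan)
  show "4 - pi/2 < Zc u"
    using Zc_le_iff[OF \<open>0 < u\<close> assms(2), of "4 - pi/2"] assms pi_less_4 by (auto simp: FZ_between)
qed

lemma unpack_Z: "\<omega> \<in> space M \<Longrightarrow> unpack (Z \<omega>) = (Y \<omega>, D \<omega>)"
  using D01 arctan_bounded[of "Y \<omega>"] pi_less_4 by (auto simp: unpack_def Z_def tan_arctan)

lemma Zc_meas [measurable]: "Zc \<in> borel_measurable uniform01"
  unfolding Zc_def FZ_def by (rule borel_measurable_quantile_cdf[OF real_distribution_Z])

definition Yc :: "real \<Rightarrow> real" where
  "Yc u = fst (unpack (Zc u))"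

definition Dc :: "real \<Rightarrow> real" where
  "Dc u = snd (unpack (Zc u))"

text \<open>The boundary point u = p 0 is assigned asymmetrically so that the outcome equation
  holds everywhere, not just almost everywhere.\<close>

definition Y0c :: "real \<Rightarrow> real" where
  "Y0c u = (if u \<le> p 0 then Yc u else quantile K0 u)"

definition Y1c :: "real \<Rightarrow> real" where
  "Y1c u = (if u < p 0 then quantile K1 u else Yc u)"

lemma Dc_eq: "u \<in> space uniform01 \<Longrightarrow> Dc u = (if u \<le> p 0 then 0 else 1)"
  using Zc_le_2_iff[of u] by (auto simp: Dc_def unpack_def)

lemma Yc_le_iff_D0:
  assumes "0 < u" "u < p 0"
  shows "Yc u \<le> y \<longleftrightarrow> u \<le> G 0 y"
proof -
  have "u < 1" using assms p_sum G_nonneg[of 1 0] G_le_p[of 1 0] by linarith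
  have "Zc u \<le> 2" using Zc_le_2_iff[OF assms(1) \<open>u < 1\<close>] assms(2) by simp
  then have "Yc u \<le> y \<longleftrightarrow> arctan (tan (Zc u)) \<le> arctan y"
    by (simp add: Yc_def unpack_def arctan_le_iff)
  also have "\<dots> \<longleftrightarrow> Zc u \<le> arctan y"
    using Zc_range_D0[OF assms] by (simp add: arctan_tan)
  also have "\<dots> \<longleftrightarrow> u \<le> G 0 y"
    using Zc_le_iff[OF assms(1) \<open>u < 1\<close>] by (simp add: FZ_arctan)
  finally show ?thesis .
qed

lemma Yc_le_iff_D1:
  assumes "p 0 < u" "u < 1"
  shows "Yc u \<le> y \<longleftrightarrow> u \<le> p 0 + G 1 y"
proof -
  have "0 < u" using assms G_nonneg[of 0 0] G_le_p[of 0 0] by linarith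
  have "\<not> Zc u \<le> 2" using Zc_le_2_iff[OF \<open>0 < u\<close> assms(2)] assms(1) by simp
  then have "Yc u \<le> y \<longleftrightarrow> arctan (tan (Zc u - 4)) \<le> arctan y"
    by (simp add: Yc_def unpack_def arctan_le_iff)
  also have "\<dots> \<longleftrightarrow> Zc u \<le> 4 + arctan y"
    using Zc_range_D1[OF assms] by (simp add: arctan_tan diff_le_eq add.commute)
  also have "\<dots> \<longleftrightarrow> u \<le> p 0 + G 1 y"
    using Zc_le_iff[OF \<open>0 < u\<close> assms(2)] by (simp add: FZ_shifted_arctan)
  finally show ?thesis .
qed

lemma Y0c_le_iff:
  "u \<in> space uniform01 \<Longrightarrow> u \<noteq> p 0 \<Longrightarrow>
    Y0c u \<le> y \<longleftrightarrow> (u < p 0 \<and> u \<le> G 0 y) \<or> (p 0 < u \<and> u \<le> K0 y)"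
  using Yc_le_iff_D0[of u y] K0_quantile_le_iff[of u y] by (auto simp: Y0c_def)

lemma Y1c_le_iff:
  "u \<in> space uniform01 \<Longrightarrow> u \<noteq> p 0 \<Longrightarrow>
    Y1c u \<le> y \<longleftrightarrow> (u < p 0 \<and> u \<le> K1 y) \<or> (p 0 < u \<and> u \<le> p 0 + G 1 y)"
  using Yc_le_iff_D1[of u y] K1_quantile_le_iff[of u y] by (auto simp: Y1c_def)

lemma Yc_meas [measurable]: "Yc \<in> borel_measurable uniform01"
  unfolding Yc_def by measurable

lemma Dc_meas [measurable]: "Dc \<in> borel_measurable uniform01"
  unfolding Dc_def by measurable

lemma Y0c_meas [measurable]: "Y0c \<in> borel_measurable uniform01"
proof (subst borel_measurable_iff_le, intro allI)
  fix y
  have "{u \<in> space uniform01. Y0c u \<le> y}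
      = {u \<in> space uniform01. (u \<le> p 0 \<and> Yc u \<le> y) \<or> (p 0 < u \<and> u \<le> K0 y)}"
    using K0_quantile_le_iff by (auto simp: Y0c_def) (meson not_le)
  also have "\<dots> \<in> sets uniform01" by measurable
  finally show "{u \<in> space uniform01. Y0c u \<le> y} \<in> sets uniform01" .
qed

lemma Y1c_meas [measurable]: "Y1c \<in> borel_measurable uniform01"
proof (subst borel_measurable_iff_le, intro allI)
  fix y
  have "{u \<in> space uniform01. Y1c u \<le> y}
      = {u \<in> space uniform01. (u < p 0 \<and> u \<le> K1 y) \<or> (p 0 \<le> u \<and> Yc u \<le> y)}"
    using K1_quantile_le_iff by (auto simp: Y1c_def)
  also have "\<dots> \<in> sets uniform01" by measurable
  finally show "{u \<in> space uniform01. Y1c u \<le> y} \<in> sets uniform01" .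
qed

lemma outcome_eq_c: "u \<in> space uniform01 \<Longrightarrow> Yc u = Y1c u * Dc u + Y0c u * (1 - Dc u)"
  using Dc_eq[of u] by (auto simp: Y0c_def Y1c_def)

lemma selection_c:
  assumes u: "u \<in> space uniform01"
  shows "(Y1c u > Y0c u \<longrightarrow> Dc u = 1) \<and> (Y1c u < Y0c u \<longrightarrow> Dc u = 0)"
proof -
  have "0 < u" "u < 1" using u by auto
  consider "u < p 0" | "u = p 0" | "p 0 < u" by linarith
  then show ?thesis
  proof cases
    case 1
    have "u \<le> K1 (Yc u)"
      using Yc_le_iff_D0[OF \<open>0 < u\<close> 1, of "Yc u"] K1_bounds(1)[of "Yc u"] by simp
    then have "Y1c u \<le> Y0c u"
      using K1_quantile_le_iff[OF \<open>0 < u\<close> 1] 1 by (simp add: Y0c_def Y1c_def)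
    then show ?thesis using Dc_eq[OF u] 1 by auto
  next
    case 2
    then show ?thesis using Dc_eq[OF u] by (simp add: Y0c_def Y1c_def)
  next
    case 3
    have "u \<le> K0 (Yc u)"
      using Yc_le_iff_D1[OF 3 \<open>u < 1\<close>, of "Yc u"] K0_bounds(1)[of "Yc u"] by simp
    then have "Y0c u \<le> Y1c u"
      using K0_quantile_le_iff[OF 3 \<open>u < 1\<close>] 3 by (simp add: Y0c_def Y1c_def)
    then show ?thesis using Dc_eq[OF u] 3 by auto
  qed
qed

lemma distr_Yc_Dc:
  "distr uniform01 (borel \<Otimes>\<^sub>M borel) (\<lambda>u. (Yc u, Dc u)) = distr M (borel \<Otimes>\<^sub>M borel) (\<lambda>\<omega>. (Y \<omega>, D \<omega>))"
proof -
  have "distr uniform01 (borel \<Otimes>\<^sub>M borel) (\<lambda>u. (Yc u, Dc u)) = distr uniform01 (borel \<Otimes>\<^sub>M borel) (unpack \<circ> Zc)"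
    by (simp add: Yc_def Dc_def comp_def)
  also have "\<dots> = distr (distr uniform01 borel Zc) (borel \<Otimes>\<^sub>M borel) unpack"
    by (rule distr_distr[symmetric]) simp_all
  also have "distr uniform01 borel Zc = distr M borel Z"
    unfolding Zc_def FZ_def by (rule distr_uniform01_quantile_cdf[OF real_distribution_Z])
  also have "distr (distr M borel Z) (borel \<Otimes>\<^sub>M borel) unpack = distr M (borel \<Otimes>\<^sub>M borel) (unpack \<circ> Z)"
    by (rule distr_distr) simp_all
  also have "\<dots> = distr M (borel \<Otimes>\<^sub>M borel) (\<lambda>\<omega>. (Y \<omega>, D \<omega>))"
    by (rule distr_cong) (auto simp: unpack_Z)
  finally show ?thesis .
qed

lemma cdf_Y0c: "measure uniform01 {u \<in> space uniform01. Y0c u \<le> y} = F0 y"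
proof -
  have bounds: "0 \<le> G 0 y" "G 0 y \<le> p 0" "p 0 \<le> K0 y" "K0 y \<le> 1"
    using G_nonneg[of 0 y] G_le_p[of 0 y] K0_bounds[of y] G_nonneg[of 1 y] by linarith+
  have "measure uniform01 {u \<in> space uniform01. Y0c u \<le> y}
      = measure uniform01 ({0<..<G 0 y} \<union> {p 0<..<K0 y})"
  proof (rule measure_eq_AE)
    show "AE u in uniform01. u \<in> {u \<in> space uniform01. Y0c u \<le> y} \<longleftrightarrow> u \<in> {0<..<G 0 y} \<union> {p 0<..<K0 y}"
      using AE_space AE_uniform01_neq[of "G 0 y"] AE_uniform01_neq[of "K0 y"] AE_uniform01_neq[of "p 0"]
      by eventually_elim (use Y0c_le_iff[of _ y] bounds in auto)
    show "{0<..<G 0 y} \<union> {p 0<..<K0 y} \<in> sets uniform01"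
      using bounds by (auto simp: sets_uniform01)
  qed measurable
  also have "\<dots> = F0 y"
    using bounds by (simp add: measure_uniform01_Ioo_Un K0_def F_def)
  finally show ?thesis .
qed

lemma cdf_Y1c: "measure uniform01 {u \<in> space uniform01. Y1c u \<le> y} = F1 y"
proof -
  have bounds: "0 \<le> K1 y" "K1 y \<le> p 0" "p 0 \<le> p 0 + G 1 y" "p 0 + G 1 y \<le> 1"
    using G_nonneg[of 0 y] K1_bounds[of y] G_nonneg[of 1 y] G_le_p[of 1 y] p_sum by auto
  have "measure uniform01 {u \<in> space uniform01. Y1c u \<le> y}
      = measure uniform01 ({0<..<K1 y} \<union> {p 0<..<p 0 + G 1 y})"
  proof (rule measure_eq_AE)
    show "AE u in uniform01. u \<in> {u \<in> space uniform01. Y1c u \<le> y} \<longleftrightarrow> u \<in> {0<..<K1 y} \<union> {p 0<..<p 0 + G 1 y}"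
      using AE_space AE_uniform01_neq[of "K1 y"] AE_uniform01_neq[of "p 0 + G 1 y"] AE_uniform01_neq[of "p 0"]
      by eventually_elim (use Y1c_le_iff[of _ y] bounds in auto)
    show "{0<..<K1 y} \<union> {p 0<..<p 0 + G 1 y} \<in> sets uniform01"
      using bounds by (auto simp: sets_uniform01)
  qed measurable
  also have "\<dots> = F1 y"
    using bounds by (simp add: measure_uniform01_Ioo_Un K1_def F_def)
  finally show ?thesis .
qed

text \<open>Yt is defined by the outcome equation rather than as a coordinate, because the equation
  must hold on all of space N.\<close>

lemma coupling_exists:
  "\<exists>(N :: (real \<times> real \<times> real \<times> real) measure) Yt Dt Y0 Y1.
     prob_space N \<and>
     Yt \<in> borel_measurable N \<and> Dt \<in> borel_measurable N \<and>
     Y0 \<in> borel_measurable N \<and> Y1 \<in> borel_measurable N \<and>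
     distr N (borel \<Otimes>\<^sub>M borel) (\<lambda>\<omega>. (Yt \<omega>, Dt \<omega>))
       = distr M (borel \<Otimes>\<^sub>M borel) (\<lambda>\<omega>. (Y \<omega>, D \<omega>)) \<and>
     (\<forall>y. measure N {\<omega> \<in> space N. Y0 \<omega> \<le> y} = F0 y) \<and>
     (\<forall>y. measure N {\<omega> \<in> space N. Y1 \<omega> \<le> y} = F1 y) \<and>
     (\<forall>\<omega>\<in>space N. Yt \<omega> = Y1 \<omega> * Dt \<omega> + Y0 \<omega> * (1 - Dt \<omega>)) \<and>
     (AE \<omega> in N. (Y1 \<omega> > Y0 \<omega> \<longrightarrow> Dt \<omega> = 1) \<and> (Y1 \<omega> < Y0 \<omega> \<longrightarrow> Dt \<omega> = 0))"
proof -
  let ?S = "borel \<Otimes>\<^sub>M borel \<Otimes>\<^sub>M borel \<Otimes>\<^sub>M borel :: (real \<times> real \<times> real \<times> real) measure"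
  define c where "c u = (Yc u, Dc u, Y0c u, Y1c u)" for u
  define N where "N = distr uniform01 ?S c"
  define Dt :: "real \<times> real \<times> real \<times> real \<Rightarrow> real" where "Dt = fst \<circ> snd"
  define Y0 :: "real \<times> real \<times> real \<times> real \<Rightarrow> real" where "Y0 = fst \<circ> snd \<circ> snd"
  define Y1 :: "real \<times> real \<times> real \<times> real \<Rightarrow> real" where "Y1 = snd \<circ> snd \<circ> snd"
  define Yt where "Yt \<omega> = Y1 \<omega> * Dt \<omega> + Y0 \<omega> * (1 - Dt \<omega>)" for \<omega>
  have c_meas [measurable]: "c \<in> uniform01 \<rightarrow>\<^sub>M ?S"
    unfolding c_def by measurable
  have [measurable]: "Dt \<in> borel_measurable ?S" "Y0 \<in> borel_measurable ?S" "Y1 \<in> borel_measurable ?S"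
    "Yt \<in> borel_measurable ?S"
    unfolding Dt_def Y0_def Y1_def Yt_def by measurable
  have "distr N (borel \<Otimes>\<^sub>M borel) (\<lambda>\<omega>. (Yt \<omega>, Dt \<omega>))
      = distr uniform01 (borel \<Otimes>\<^sub>M borel) (\<lambda>u. (Yt (c u), Dt (c u)))"
    unfolding N_def by (subst distr_distr) (simp_all add: comp_def)
  also have "\<dots> = distr uniform01 (borel \<Otimes>\<^sub>M borel) (\<lambda>u. (Yc u, Dc u))"
    by (rule distr_cong) (auto simp: c_def Yt_def Dt_def Y0_def Y1_def outcome_eq_c)
  finally have law: "distr N (borel \<Otimes>\<^sub>M borel) (\<lambda>\<omega>. (Yt \<omega>, Dt \<omega>))
      = distr M (borel \<Otimes>\<^sub>M borel) (\<lambda>\<omega>. (Y \<omega>, D \<omega>))"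
    by (simp add: distr_Yc_Dc)
  have measure_N: "measure N {\<omega> \<in> space N. X \<omega> \<le> y} = measure uniform01 {u \<in> space uniform01. X (c u) \<le> y}"
    if "X \<in> borel_measurable ?S" for X :: "_ \<Rightarrow> real" and y
  proof -
    have "{\<omega> \<in> space ?S. X \<omega> \<le> y} \<in> sets ?S" using that by measurable
    from measure_distr[OF c_meas this] show ?thesis
      unfolding N_def by (simp add: vimage_def Int_def conj_commute space_pair_measure)
  qed
  have cdfs: "measure N {\<omega> \<in> space N. Y0 \<omega> \<le> y} = F0 y" "measure N {\<omega> \<in> space N. Y1 \<omega> \<le> y} = F1 y" for y
    using measure_N[of Y0 y] measure_N[of Y1 y] cdf_Y0c[of y] cdf_Y1c[of y]
    by (simp_all add: c_def Y0_def Y1_def)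
  have selection: "AE \<omega> in N. (Y1 \<omega> > Y0 \<omega> \<longrightarrow> Dt \<omega> = 1) \<and> (Y1 \<omega> < Y0 \<omega> \<longrightarrow> Dt \<omega> = 0)"
    unfolding N_def using selection_c by (subst AE_distr_iff) (auto simp: c_def Dt_def Y0_def Y1_def)
  have prob_N: "prob_space N"
    unfolding N_def by (rule prob_space.prob_space_distr[OF prob_space_uniform01 c_meas])
  have meas_N: "Yt \<in> borel_measurable N" "Dt \<in> borel_measurable N"
    "Y0 \<in> borel_measurable N" "Y1 \<in> borel_measurable N"
    unfolding N_def by simp_all
  show ?thesis
    by (rule exI[of _ N], rule exI[of _ Yt], rule exI[of _ Dt], rule exI[of _ Y0], rule exI[of _ Y1])
      (use prob_N meas_N law cdfs selection in \<open>simp add: Yt_def\<close>)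
qed

end

theorem theorem4:
  shows
   "(\<forall>(M :: 'a measure) Y0 Y1 Y D.
        prob_space M \<and>
        Y0 \<in> borel_measurable M \<and> Y1 \<in> borel_measurable M \<and>
        Y \<in> borel_measurable M \<and> D \<in> borel_measurable M \<and>
        (\<forall>\<omega>\<in>space M. D \<omega> \<in> {0, 1}) \<and>
        (\<forall>\<omega>\<in>space M. Y \<omega> = Y1 \<omega> * D \<omega> + Y0 \<omega> * (1 - D \<omega>)) \<and>
        (AE \<omega> in M. (Y1 \<omega> > Y0 \<omega> \<longrightarrow> D \<omega> = 1) \<and> (Y1 \<omega> < Y0 \<omega> \<longrightarrow> D \<omega> = 0))
      \<longrightarrow> star_ineq M Y D (cdf (distr M borel Y0)) (cdf (distr M borel Y1)))
    \<and>
    (\<forall>(M :: 'a measure) Y D (F0 :: real \<Rightarrow> real) (F1 :: real \<Rightarrow> real).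
        prob_space M \<and>
        Y \<in> borel_measurable M \<and> D \<in> borel_measurable M \<and>
        (\<forall>\<omega>\<in>space M. D \<omega> \<in> {0, 1}) \<and>
        (\<forall>x. continuous (at_right x) F0) \<and> (\<forall>x. continuous (at_right x) F1) \<and>
        (\<forall>x. 0 \<le> F0 x \<and> F0 x \<le> 1) \<and> (\<forall>x. 0 \<le> F1 x \<and> F1 x \<le> 1) \<and>
        star_ineq M Y D F0 F1
      \<longrightarrow>
        (\<exists>(N :: (real \<times> real \<times> real \<times> real) measure) Yt Dt Y0 Y1.
           prob_space N \<and>
           Yt \<in> borel_measurable N \<and> Dt \<in> borel_measurable N \<and>
           Y0 \<in> borel_measurable N \<and> Y1 \<in> borel_measurable N \<and>
           distr N (borel \<Otimes>\<^sub>M borel) (\<lambda>\<omega>. (Yt \<omega>, Dt \<omega>))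
             = distr M (borel \<Otimes>\<^sub>M borel) (\<lambda>\<omega>. (Y \<omega>, D \<omega>)) \<and>
           (\<forall>y. measure N {\<omega> \<in> space N. Y0 \<omega> \<le> y} = F0 y) \<and>
           (\<forall>y. measure N {\<omega> \<in> space N. Y1 \<omega> \<le> y} = F1 y) \<and>
           (\<forall>\<omega>\<in>space N. Yt \<omega> = Y1 \<omega> * Dt \<omega> + Y0 \<omega> * (1 - Dt \<omega>)) \<and>
           (AE \<omega> in N. (Y1 \<omega> > Y0 \<omega> \<longrightarrow> Dt \<omega> = 1) \<and> (Y1 \<omega> < Y0 \<omega> \<longrightarrow> Dt \<omega> = 0))))"
  by (intro conjI allI impI; elim conjE)
    (blast intro: Roy_model_star_ineq star_coupling.coupling_exists star_coupling.intro)+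

end
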